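(* Suppose $\Delta(x,\varepsilon)$ is not independent of $x$. Let $r\ge1$ be the smallest index such that $\Delta_r$ is a nonconstant function, so that $$\Delta(x,\varepsilon)=A(\varepsilon)+\Delta_r(x)\varepsilon^r+o(\varepsilon^r),$$ where $A(\varepsilon)$ is a polynomial in $\varepsilon$ of degree at most $r-1$ with constant coefficients. Then $\Delta_r$ is periodic with period $\mu$, that is, $$\Delta_r(x+\mu)=\Delta_r(x)\quad\text{for all }x\in\mathbb R.$$
   Context: Fix integers $p$ and $q\ge1$ and put $\mu=2\pi p/q$. Let $f:\mathbb R\to\mathbb R$ be a $2\pi$-periodic real-analytic function. For real parameters $\varepsilon,\delta$ set $g(x)=-\delta-\varepsilon f(x)$ and consider the map $T_{\varepsilon,\delta}(x,y)=(x+y+\mu+g(x),\;y+g(x))$ on $\mathbb R^2$. Define ${}_nR$ and ${}_nS$ by $T^n_{\varepsilon,\delta}(x_0,y_0)=(x_0+n\mu+{}_nR,\;y_0+{}_nS)$. There exist $\bar{\bar\varepsilon},\eta>0$ and real-analytic functions $\Delta(x,\varepsilon)$ and $Y(x,\varepsilon)$, defined for $x\in\mathbb R$ and $|\varepsilon|<\bar{\bar\varepsilon}$ and vanishing at $\varepsilon=0$, such that $(\delta,y)=(\Delta(x,\varepsilon),Y(x,\varepsilon))$ is the unique solution with $|\delta|,|y|<\eta$ of ${}_qR(x,y,\varepsilon,\delta)={}_qS(x,y,\varepsilon,\delta)=0$. Write $\Delta(x,\varepsilon)=\sum_{n\ge1}\Delta_n(x)\varepsilon^n$. *)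

theory Defs
  imports "HOL-Analysis.Analysis"
begin

definition mu :: "int \<Rightarrow> int \<Rightarrow> real" where
  "mu p q = 2 * pi * real_of_int p / real_of_int q"

definition Tmap :: "int \<Rightarrow> int \<Rightarrow> (real \<Rightarrow> real) \<Rightarrow> real \<Rightarrow> real \<Rightarrow> real \<times> real \<Rightarrow> real \<times> real" where
  "Tmap p q f eps delta = (\<lambda>(x, y).
     (let g = - delta - eps * f x in (x + y + mu p q + g, y + g)))"

definition iterR :: "int \<Rightarrow> int \<Rightarrow> (real \<Rightarrow> real) \<Rightarrow> nat \<Rightarrow> real \<Rightarrow> real \<Rightarrow> real \<Rightarrow> real \<Rightarrow> real" where
  "iterR p q f n x y eps delta =
     fst ((Tmap p q f eps delta ^^ n) (x, y)) - x - real n * mu p q"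

definition iterS :: "int \<Rightarrow> int \<Rightarrow> (real \<Rightarrow> real) \<Rightarrow> nat \<Rightarrow> real \<Rightarrow> real \<Rightarrow> real \<Rightarrow> real \<Rightarrow> real" where
  "iterS p q f n x y eps delta =
     snd ((Tmap p q f eps delta ^^ n) (x, y)) - y"

definition real_analytic_on :: "(real \<Rightarrow> real) \<Rightarrow> real set \<Rightarrow> bool" where
  "real_analytic_on F S \<longleftrightarrow>
     (\<forall>x0\<in>S. \<exists>r>0. \<exists>a :: nat \<Rightarrow> real. \<forall>x. x \<in> S \<and> \<bar>x - x0\<bar> < r \<longrightarrow>
        (\<lambda>n. a n * (x - x0) ^ n) sums F x)"

definition real_analytic2_on :: "(real \<Rightarrow> real \<Rightarrow> real) \<Rightarrow> (real \<times> real) set \<Rightarrow> bool" where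
  "real_analytic2_on F S \<longleftrightarrow>
     (\<forall>(x0, e0)\<in>S. \<exists>r>0. \<exists>a :: nat \<Rightarrow> nat \<Rightarrow> real. \<forall>x e.
        (x, e) \<in> S \<and> \<bar>x - x0\<bar> < r \<and> \<bar>e - e0\<bar> < r \<longrightarrow>
        ((\<lambda>(m, n). a m n * (x - x0) ^ m * (e - e0) ^ n) has_sum F x e) UNIV)"

end

theory Submission
  imports Defs "HOL-Library.Periodic_Fun"
begin

text \<open>Fix \<open>x\<close> and put \<open>z = x + \<mu>\<close>. The point \<open>(x, Y x \<epsilon>)\<close> lies on a periodic orbit of
  \<open>T\<close> with parameter \<open>\<delta> = \<Delta>(x, \<epsilon>)\<close>, and so does its image \<open>(z + h \<epsilon>, h \<epsilon>)\<close>, where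
  \<open>h \<epsilon> = Y x \<epsilon> - \<Delta>(x, \<epsilon>) - \<epsilon> f x \<rightarrow> 0\<close>. By uniqueness \<open>\<Delta>(x, \<epsilon>) = \<Delta>(z + h \<epsilon>, \<epsilon>)\<close>.
  Since the coefficients \<open>\<Delta>\<^sub>n\<close> with \<open>n < r\<close> are constant, the double power series of \<open>\<Delta>\<close>
  at \<open>(z, 0)\<close> gives \<open>|\<Delta>(z + u, \<epsilon>) - \<Delta>(z, \<epsilon>)| \<le> K |u| |\<epsilon>|\<^sup>r\<close>. Hence
  \<open>(\<Delta>(x, \<epsilon>) - \<Delta>(z, \<epsilon>)) / \<epsilon>\<^sup>r\<close> tends to \<open>0\<close>; but it also tends to \<open>\<Delta>\<^sub>r(x) - \<Delta>\<^sub>r(z)\<close>.\<close>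

lemma powser_shift_tendsto:
  fixes d :: "nat \<Rightarrow> real"
  assumes s: "0 < s" and sums: "\<And>e. \<bar>e\<bar> < s \<Longrightarrow> (\<lambda>n. d n * e^n) sums S e"
    and below: "\<And>n. n < r \<Longrightarrow> d n = 0"
  shows "((\<lambda>e. S e / e^r) \<longlongrightarrow> d r) (at 0)"
proof -
  have "(\<lambda>i. d (i + r) * e^i) sums (S e / e^r)" if "e \<noteq> 0" "norm e < s" for e
  proof -
    have "(\<lambda>i. d (i + r) * e^(i + r)) sums S e"
      using sums_split_initial_segment[OF sums[of e], of r] that below by simp
    then have "(\<lambda>i. d (i + r) * e^(i + r) / e^r) sums (S e / e^r)" by (rule sums_divide)
    then show ?thesis using that by (simp add: power_add)
  qed
  from powser_limit_0_strong[OF s this] show ?thesis by simp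
qed

lemma powser_sums_from_Suc:
  fixes c :: "nat \<Rightarrow> real"
  assumes "(\<lambda>n. c (Suc n) * e^Suc n) sums S"
  shows "(\<lambda>n. (if n = 0 then 0 else c n) * e^n) sums S"
  using assms sums_Suc_iff[of "\<lambda>n. (if n = 0 then 0 else c n) * e^n" S] by simp

lemma powser_coeffs_eq_zero:
  fixes c :: "nat \<Rightarrow> real"
  assumes s: "0 < s" and sums: "\<And>e. \<bar>e\<bar> < s \<Longrightarrow> (\<lambda>n. c n * e^n) sums 0"
  shows "c n = 0"
proof (induction n rule: less_induct)
  case (less n)
  have "((\<lambda>e. 0 / e^n) \<longlongrightarrow> c n) (at 0)"
    by (rule powser_shift_tendsto[OF s sums less])
  then show ?case by (simp add: tendsto_const_iff)
qed

lemma has_sum_powser_zero: "((\<lambda>m. c m * 0^m) has_sum (c 0 :: real)) UNIV"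
  by (rule norm_summable_imp_has_sum[OF _ powser_sums_zero])
     (use powser_sums_zero[of "\<lambda>m. \<bar>c m\<bar>"] in \<open>auto simp: abs_mult power_abs sums_iff\<close>)

lemma infsum_powser_zero: "(\<Sum>\<^sub>\<infinity>m. c m * 0^m) = (c 0 :: real)"
  using has_sum_powser_zero by (rule infsumI)

lemma infsum_powser_minus_const_le:
  fixes c :: "nat \<Rightarrow> real"
  assumes s: "0 < s" and u: "\<bar>u\<bar> \<le> s"
    and abs_summable: "(\<lambda>m. \<bar>c m\<bar> * s^m) summable_on UNIV"
  shows "\<bar>(\<Sum>\<^sub>\<infinity>m. c m * u^m) - c 0\<bar> \<le> \<bar>u\<bar> / s * (\<Sum>\<^sub>\<infinity>m. \<bar>c m\<bar> * s^m)"
proof -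
  have term_le: "\<bar>c m * u^m - c m * 0^m\<bar> \<le> \<bar>u\<bar> / s * (\<bar>c m\<bar> * s^m)" for m
  proof (cases m)
    case (Suc k)
    have "\<bar>u\<bar> * \<bar>u\<bar>^k \<le> \<bar>u\<bar> * s^k" using u by (intro mult_left_mono power_mono) auto
    then have "\<bar>c m\<bar> * (\<bar>u\<bar> * \<bar>u\<bar>^k) \<le> \<bar>c m\<bar> * (\<bar>u\<bar> / s * s^Suc k)"
      using s by (intro mult_left_mono) auto
    then show ?thesis using Suc s by (simp add: abs_mult power_abs mult_ac)
  qed (use s in simp)
  have summable: "(\<lambda>m. c m * u^m) summable_on UNIV"
  proof -
    have "(\<lambda>m. norm (c m * u^m)) summable_on UNIV"
      by (rule Infinite_Sum.abs_summable_on_comparison_test'[OF abs_summable])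
         (use u in \<open>auto simp: abs_mult power_abs intro!: mult_left_mono power_mono\<close>)
    then show ?thesis using summable_on_iff_abs_summable_on_real by blast
  qed
  have "((\<lambda>m. c m * u^m + - (c m * 0^m)) has_sum ((\<Sum>\<^sub>\<infinity>m. c m * u^m) + - c 0)) UNIV"
    by (intro has_sum_add has_sum_uminusI has_sum_infsum summable has_sum_powser_zero)
  moreover have "((\<lambda>m. \<bar>u\<bar> / s * (\<bar>c m\<bar> * s^m)) has_sum (\<bar>u\<bar> / s * (\<Sum>\<^sub>\<infinity>m. \<bar>c m\<bar> * s^m))) UNIV"
    by (intro has_sum_cmult_right has_sum_infsum abs_summable)
  ultimately show ?thesis
    using norm_infsum_le[where f="\<lambda>m. c m * u^m + - (c m * 0^m)"] term_le by simp
qed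

context
  fixes a :: "nat \<Rightarrow> nat \<Rightarrow> real" and F :: "real \<Rightarrow> real \<Rightarrow> real" and s :: real
  assumes s_pos: "0 < s"
    and double_has_sum: "\<And>u v. \<bar>u\<bar> \<le> s \<Longrightarrow> \<bar>v\<bar> \<le> s \<Longrightarrow>
      ((\<lambda>(m, n). a m n * u^m * v^n) has_sum F u v) UNIV"
begin

lemma double_powser_swap_has_sum:
  assumes "\<bar>u\<bar> \<le> s" "\<bar>v\<bar> \<le> s"
  shows "((\<lambda>(n, m). a m n * u^m * v^n) has_sum F u v) (UNIV \<times> UNIV)"
proof -
  have "((\<lambda>(m, n). a m n * u^m * v^n) has_sum F u v) (UNIV \<times> UNIV)"
    using double_has_sum[OF assms] by simp
  then show ?thesis by (subst (asm) has_sum_swap) (simp add: case_prod_unfold)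
qed

lemma double_powser_abs_summable: "(\<lambda>(n, m). \<bar>a m n\<bar> * s^m * s^n) summable_on UNIV"
proof -
  have "(\<lambda>(n, m). a m n * s^m * s^n) summable_on UNIV"
    using double_powser_swap_has_sum[of s s] s_pos by (auto intro: has_sum_imp_summable)
  then have "(\<lambda>x. norm ((\<lambda>(n, m). a m n * s^m * s^n) x)) summable_on UNIV"
    using summable_on_iff_abs_summable_on_real by blast
  then show ?thesis using s_pos by (simp add: case_prod_unfold abs_mult)
qed

lemma double_powser_row_abs_summable: "(\<lambda>m. \<bar>a m n\<bar> * s^m) summable_on UNIV"
proof -
  have "(\<lambda>m. \<bar>a m n\<bar> * s^m * s^n) summable_on UNIV"
    using summable_on_SigmaD1[of "\<lambda>n m. \<bar>a m n\<bar> * s^m * s^n" UNIV "\<lambda>_. UNIV" n]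
      double_powser_abs_summable by simp
  then show ?thesis
    using summable_on_cmult_left'[of "s^n" "\<lambda>m. \<bar>a m n\<bar> * s^m" UNIV] s_pos by simp
qed

lemma double_powser_row_summable:
  assumes "\<bar>u\<bar> \<le> s"
  shows "(\<lambda>m. a m n * u^m) summable_on UNIV"
proof -
  have "(\<lambda>m. norm (a m n * u^m)) summable_on UNIV"
    by (rule Infinite_Sum.abs_summable_on_comparison_test'[OF double_powser_row_abs_summable])
       (use assms in \<open>auto simp: abs_mult power_abs intro!: mult_left_mono power_mono\<close>)
  then show ?thesis using summable_on_iff_abs_summable_on_real by blast
qed

lemma double_powser_sums_rows:
  assumes "\<bar>u\<bar> \<le> s" "\<bar>v\<bar> \<le> s"
  shows "(\<lambda>n. (\<Sum>\<^sub>\<infinity>m. a m n * u^m) * v^n) sums F u v"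
proof -
  have "((\<lambda>n. (\<Sum>\<^sub>\<infinity>m. a m n * u^m) * v^n) has_sum F u v) UNIV"
  proof (rule has_sum_SigmaD[OF double_powser_swap_has_sum[OF assms]])
    show "((\<lambda>m. (\<lambda>(n, m). a m n * u^m * v^n) (n, m)) has_sum (\<Sum>\<^sub>\<infinity>m. a m n * u^m) * v^n) UNIV" for n
      using has_sum_cmult_left[OF has_sum_infsum[OF double_powser_row_summable[OF assms(1)]]]
      by simp
  qed
  then show ?thesis by (rule has_sum_imp_sums)
qed

lemma double_powser_row_bounds_summable: "summable (\<lambda>n. (\<Sum>\<^sub>\<infinity>m. \<bar>a m n\<bar> * s^m) * s^n)"
proof -
  have "((\<lambda>n. (\<Sum>\<^sub>\<infinity>m. \<bar>a m n\<bar> * s^m) * s^n) has_sum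
          (\<Sum>\<^sub>\<infinity>(n, m). \<bar>a m n\<bar> * s^m * s^n)) UNIV"
  proof (rule has_sum_SigmaD)
    show "((\<lambda>(n, m). \<bar>a m n\<bar> * s^m * s^n) has_sum (\<Sum>\<^sub>\<infinity>(n, m). \<bar>a m n\<bar> * s^m * s^n)) (UNIV \<times> UNIV)"
      using has_sum_infsum[OF double_powser_abs_summable] by simp
    show "((\<lambda>m. (\<lambda>(n, m). \<bar>a m n\<bar> * s^m * s^n) (n, m)) has_sum (\<Sum>\<^sub>\<infinity>m. \<bar>a m n\<bar> * s^m) * s^n) UNIV" for n
      using has_sum_cmult_left[OF has_sum_infsum[OF double_powser_row_abs_summable]] by simp
  qed
  then show ?thesis by (rule sums_summable[OF has_sum_imp_sums])
qed

lemma double_powser_diff_le: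
  assumes row_const: "\<And>u n. \<bar>u\<bar> \<le> s \<Longrightarrow> n < r \<Longrightarrow> (\<Sum>\<^sub>\<infinity>m. a m n * u^m) = a 0 n"
  shows "\<exists>K. \<forall>u v. \<bar>u\<bar> \<le> s \<longrightarrow> \<bar>v\<bar> \<le> s \<longrightarrow> \<bar>F u v - F 0 v\<bar> \<le> K * \<bar>u\<bar> * \<bar>v\<bar>^r"
proof (intro exI allI impI)
  define B where "B n = (\<Sum>\<^sub>\<infinity>m. \<bar>a m n\<bar> * s^m)" for n
  have B_summable: "summable (\<lambda>n. B (n + r) * s^n)"
    using double_powser_row_bounds_summable summable_powser_ignore_initial_segment[of B r s]
    by (simp add: B_def)
  have B_nonneg: "B n \<ge> 0" for n
    unfolding B_def by (rule infsum_nonneg) (use s_pos in auto)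
  fix u v assume u: "\<bar>u\<bar> \<le> s" and v: "\<bar>v\<bar> \<le> s"
  define t where "t n = ((\<Sum>\<^sub>\<infinity>m. a m (n + r) * u^m) - a 0 (n + r)) * v^(n + r)" for n
  define g where "g n = \<bar>u\<bar> / s * \<bar>v\<bar>^r * (B (n + r) * s^n)" for n
  have "(\<lambda>n. ((\<Sum>\<^sub>\<infinity>m. a m n * u^m) - a 0 n) * v^n) sums (F u v - F 0 v)"
    using sums_diff[OF double_powser_sums_rows[OF u v] double_powser_sums_rows[of 0 v]] v s_pos
    by (simp add: infsum_powser_zero left_diff_distrib)
  from sums_split_initial_segment[OF this, of r]
  have t_sums: "t sums (F u v - F 0 v)"
    unfolding t_def[abs_def] using row_const[OF u] by simp
  have t_le: "norm (t n) \<le> g n" for n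
  proof -
    have "\<bar>(\<Sum>\<^sub>\<infinity>m. a m (n + r) * u^m) - a 0 (n + r)\<bar> \<le> \<bar>u\<bar> / s * B (n + r)"
      unfolding B_def by (rule infsum_powser_minus_const_le[OF s_pos u double_powser_row_abs_summable])
    moreover have "\<bar>v\<bar>^(n + r) \<le> \<bar>v\<bar>^r * s^n"
      using power_mono[OF v abs_ge_zero, of n] by (simp add: power_add mult.commute mult_right_mono)
    ultimately have "\<bar>(\<Sum>\<^sub>\<infinity>m. a m (n + r) * u^m) - a 0 (n + r)\<bar> * \<bar>v\<bar>^(n + r)
        \<le> (\<bar>u\<bar> / s * B (n + r)) * (\<bar>v\<bar>^r * s^n)"
      by (rule mult_mono) (use s_pos B_nonneg in auto)
    then show ?thesis by (simp add: t_def g_def abs_mult power_abs mult_ac)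
  qed
  have g_summable: "summable g" unfolding g_def by (rule summable_mult[OF B_summable])
  have t_abs_summable: "summable (\<lambda>n. norm (t n))"
    by (rule summable_comparison_test'[OF g_summable]) (use t_le in simp)
  have "\<bar>F u v - F 0 v\<bar> = norm (suminf t)" using t_sums by (simp add: sums_iff)
  also have "\<dots> \<le> (\<Sum>n. norm (t n))" by (rule summable_norm[OF t_abs_summable])
  also have "\<dots> \<le> suminf g" by (rule suminf_le[OF t_le t_abs_summable g_summable])
  also have "suminf g = (\<Sum>n. B (n + r) * s^n) / s * \<bar>u\<bar> * \<bar>v\<bar>^r"
    unfolding g_def using suminf_mult[OF B_summable, of "\<bar>u\<bar> / s * \<bar>v\<bar>^r"] s_pos
    by (simp add: field_simps)
  finally show "\<bar>F u v - F 0 v\<bar> \<le> (\<Sum>n. B (n + r) * s^n) / s * \<bar>u\<bar> * \<bar>v\<bar>^r" .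
qed

end

lemma real_analytic2_on_strip_expansion:
  assumes an: "real_analytic2_on F (UNIV \<times> {e. \<bar>e\<bar> < b})" and b: "0 < b"
  obtains s a where "0 < s" "s < b"
    "\<And>u v. \<bar>u\<bar> \<le> s \<Longrightarrow> \<bar>v\<bar> \<le> s \<Longrightarrow> ((\<lambda>(m, n). a m n * u^m * v^n) has_sum F (x + u) v) UNIV"
proof -
  have "(x, 0) \<in> UNIV \<times> {e. \<bar>e\<bar> < b}" using b by simp
  from bspec[OF an[unfolded real_analytic2_on_def] this]
  obtain \<rho> a where \<rho>: "0 < \<rho>" and expansion: "\<And>x' e. (x', e) \<in> UNIV \<times> {e. \<bar>e\<bar> < b} \<and>
      \<bar>x' - x\<bar> < \<rho> \<and> \<bar>e - 0\<bar> < \<rho> \<Longrightarrow> ((\<lambda>(m, n). a m n * (x' - x)^m * (e - 0)^n) has_sum F x' e) UNIV"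
    by auto
  show ?thesis
  proof
    show "0 < min \<rho> b / 2" "min \<rho> b / 2 < b" using \<rho> b by auto
    show "((\<lambda>(m, n). a m n * u^m * v^n) has_sum F (x + u) v) UNIV"
      if "\<bar>u\<bar> \<le> min \<rho> b / 2" "\<bar>v\<bar> \<le> min \<rho> b / 2" for u v
      using expansion[of "x + u" v] that \<rho> b by simp
  qed
qed

lemma real_analytic2_on_strip_tendsto:
  assumes an: "real_analytic2_on F (UNIV \<times> {e. \<bar>e\<bar> < b})" and b: "0 < b"
  shows "(F x \<longlongrightarrow> F x 0) (at 0)"
proof -
  obtain s a where s: "0 < s" "s < b" and expansion:
    "\<And>u v. \<bar>u\<bar> \<le> s \<Longrightarrow> \<bar>v\<bar> \<le> s \<Longrightarrow> ((\<lambda>(m, n). a m n * u^m * v^n) has_sum F (x + u) v) UNIV"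
    using real_analytic2_on_strip_expansion[OF an b] by blast
  have column: "(\<lambda>n. a 0 n * v^n) sums F x v" if "\<bar>v\<bar> \<le> s" for v
    using double_powser_sums_rows[OF s(1) expansion, of 0 v] that s by (simp add: infsum_powser_zero)
  have "(F x \<longlongrightarrow> a 0 0) (at 0)"
    by (rule powser_limit_0[OF s(1)]) (use column in auto)
  moreover have "F x 0 = a 0 0" using column[of 0] s by simp
  ultimately show ?thesis by simp
qed

lemma real_analytic2_on_strip_diff_le:
  assumes an: "real_analytic2_on F (UNIV \<times> {e. \<bar>e\<bar> < b})" and b: "0 < b"
    and expansion: "\<And>x e. \<bar>e\<bar> < b \<Longrightarrow> (\<lambda>n. d n x * e^n) sums F x e"
    and low_const: "\<And>n x. n < r \<Longrightarrow> d n x = d n z"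
  obtains s K where "0 < s"
    "\<And>u e. \<bar>u\<bar> \<le> s \<Longrightarrow> \<bar>e\<bar> \<le> s \<Longrightarrow> \<bar>F (z + u) e - F z e\<bar> \<le> K * \<bar>u\<bar> * \<bar>e\<bar>^r"
proof -
  obtain s a where s: "0 < s" "s < b" and double:
    "\<And>u v. \<bar>u\<bar> \<le> s \<Longrightarrow> \<bar>v\<bar> \<le> s \<Longrightarrow> ((\<lambda>(m, n). a m n * u^m * v^n) has_sum F (z + u) v) UNIV"
    using real_analytic2_on_strip_expansion[OF an b] by blast
  have row_eq: "(\<Sum>\<^sub>\<infinity>m. a m n * u^m) = d n (z + u)" if u: "\<bar>u\<bar> \<le> s" for n u
  proof -
    have "(\<lambda>n. ((\<Sum>\<^sub>\<infinity>m. a m n * u^m) - d n (z + u)) * v^n) sums 0" if "\<bar>v\<bar> < s" for v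
      using sums_diff[OF double_powser_sums_rows[OF s(1) double u less_imp_le[OF that]]
          expansion[of v "z + u"]] that s
      by (simp add: left_diff_distrib)
    from powser_coeffs_eq_zero[OF s(1) this] show ?thesis by simp
  qed
  have "(\<Sum>\<^sub>\<infinity>m. a m n * u^m) = a 0 n" if "\<bar>u\<bar> \<le> s" "n < r" for u n
    using row_eq[OF that(1)] row_eq[of 0 n] low_const[OF that(2)] s by (simp add: infsum_powser_zero)
  from double_powser_diff_le[OF s(1) double this] obtain K where K:
    "\<forall>u v. \<bar>u\<bar> \<le> s \<longrightarrow> \<bar>v\<bar> \<le> s \<longrightarrow> \<bar>F (z + u) v - F (z + 0) v\<bar> \<le> K * \<bar>u\<bar> * \<bar>v\<bar>^r"
    by blast
  show ?thesis by (rule that[OF s(1), of K]) (use K in simp)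
qed

lemma real_analytic2_on_strip_coeff_eq:
  assumes an: "real_analytic2_on F (UNIV \<times> {e. \<bar>e\<bar> < b})" and b: "0 < b"
    and expansion: "\<And>x e. \<bar>e\<bar> < b \<Longrightarrow> (\<lambda>n. d n x * e^n) sums F x e"
    and low_const: "\<And>n y y'. n < r \<Longrightarrow> d n y = d n y'"
    and h: "(h \<longlongrightarrow> 0) (at 0)"
    and F_eq: "\<forall>\<^sub>F e in at 0. F x e = F (z + h e) e"
  shows "d r x = d r z"
proof -
  obtain s K where s: "0 < s" and Lipschitz:
    "\<And>u e. \<bar>u\<bar> \<le> s \<Longrightarrow> \<bar>e\<bar> \<le> s \<Longrightarrow> \<bar>F (z + u) e - F z e\<bar> \<le> K * \<bar>u\<bar> * \<bar>e\<bar>^r"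
    using real_analytic2_on_strip_diff_le[OF an b expansion low_const] by blast
  have "\<forall>\<^sub>F e in at 0. \<bar>h e\<bar> < s"
    using tendstoD[OF h s] by (simp add: dist_real_def)
  moreover have "\<forall>\<^sub>F e in at (0::real). e \<noteq> 0 \<and> \<bar>e\<bar> < s"
    using s by (auto simp: eventually_at dist_real_def intro!: exI[of _ s])
  ultimately have quotient_le: "\<forall>\<^sub>F e in at 0. norm ((F x e - F z e) / e^r) \<le> K * \<bar>h e\<bar>"
    using F_eq
  proof eventually_elim
    case (elim e)
    then have "\<bar>F x e - F z e\<bar> \<le> K * \<bar>h e\<bar> * \<bar>e\<bar>^r" using Lipschitz[of "h e" e] by simp
    moreover have "0 < \<bar>e\<bar>^r" using elim by simp
    ultimately show ?case by (simp add: power_abs pos_divide_le_eq)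
  qed
  have "((\<lambda>e. (F x e - F z e) / e^r) \<longlongrightarrow> d r x - d r z) (at 0)"
  proof (rule powser_shift_tendsto[OF b])
    show "(\<lambda>n. (d n x - d n z) * e^n) sums (F x e - F z e)" if "\<bar>e\<bar> < b" for e
      using sums_diff[OF expansion[OF that] expansion[OF that]] by (simp add: left_diff_distrib)
    show "d n x - d n z = 0" if "n < r" for n
      using low_const[OF that] by simp
  qed
  moreover have "((\<lambda>e. (F x e - F z e) / e^r) \<longlongrightarrow> 0) (at 0)"
    by (rule Lim_null_comparison[OF quotient_le])
       (use tendsto_mult_right_zero[OF tendsto_rabs_zero[OF h]] in simp)
  ultimately have "d r x - d r z = 0" by (rule tendsto_unique[OF trivial_limit_at])
  then show ?thesis by simp
qed

lemma Tmap_apply: "Tmap p q f e d (x, y) = (x + y + mu p q - d - e * f x, y - d - e * f x)"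
  by (simp add: Tmap_def Let_def)

lemma iter_zero_Tmap_image:
  assumes q: "q \<ge> 1" and f_per: "\<And>x. f (x + 2 * pi) = f x"
    and R: "iterR p q f (nat q) x y e d = 0" and S: "iterS p q f (nat q) x y e d = 0"
  defines "y' \<equiv> y - d - e * f x"
  shows "iterR p q f (nat q) (x + mu p q + y') y' e d = 0 \<and> iterS p q f (nat q) (x + mu p q + y') y' e d = 0"
proof -
  interpret periodic_fun_simple f "2 * pi" using f_per by unfold_locales
  define T where "T = Tmap p q f e d"
  define x' where "x' = x + mu p q + y'"
  have q_mu: "real (nat q) * mu p q = 2 * pi * real_of_int p"
    using q by (simp add: mu_def)
  have T_x: "T (x, y) = (x', y')" unfolding T_def x'_def y'_def Tmap_apply by simp
  have return: "(T ^^ nat q) (x, y) = (x + 2 * pi * real_of_int p, y)"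
    using R S q_mu unfolding iterR_def iterS_def T_def by (intro prod_eqI) auto
  have "(T ^^ nat q) (x', y') = T ((T ^^ nat q) (x, y))"
    unfolding T_x[symmetric] by (rule funpow_swap1[symmetric])
  also have "\<dots> = T (x + 2 * pi * real_of_int p, y)" by (simp only: return)
  also have "\<dots> = (x' + 2 * pi * real_of_int p, y')"
    using plus_of_int[of x p] unfolding T_def Tmap_apply x'_def y'_def by (simp add: algebra_simps)
  finally show ?thesis
    unfolding iterR_def iterS_def T_def[symmetric] x'_def[symmetric] using q_mu by simp
qed

theorem lemma2:
  fixes p q :: int and f :: "real \<Rightarrow> real"
    and epsb eta :: real
    and Delta Y :: "real \<Rightarrow> real \<Rightarrow> real"
    and Dn :: "nat \<Rightarrow> real \<Rightarrow> real"
    and r :: nat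
  assumes q_pos: "q \<ge> 1"
    and f_per: "\<And>x. f (x + 2 * pi) = f x"
    and f_an: "real_analytic_on f UNIV"
    and epsb_pos: "epsb > 0" and eta_pos: "eta > 0"
    and Delta_an: "real_analytic2_on Delta (UNIV \<times> {e. \<bar>e\<bar> < epsb})"
    and Y_an: "real_analytic2_on Y (UNIV \<times> {e. \<bar>e\<bar> < epsb})"
    and Delta_0: "\<And>x. Delta x 0 = 0"
    and Y_0: "\<And>x. Y x 0 = 0"
    and sol: "\<And>x e. \<bar>e\<bar> < epsb \<Longrightarrow>
       \<bar>Delta x e\<bar> < eta \<and> \<bar>Y x e\<bar> < eta \<and>
       iterR p q f (nat q) x (Y x e) e (Delta x e) = 0 \<and>
       iterS p q f (nat q) x (Y x e) e (Delta x e) = 0"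
    and uniq: "\<And>x e d y. \<bar>e\<bar> < epsb \<Longrightarrow> \<bar>d\<bar> < eta \<Longrightarrow> \<bar>y\<bar> < eta \<Longrightarrow>
       iterR p q f (nat q) x y e d = 0 \<Longrightarrow> iterS p q f (nat q) x y e d = 0 \<Longrightarrow>
       d = Delta x e \<and> y = Y x e"
    and Dn_series: "\<And>x e. \<bar>e\<bar> < epsb \<Longrightarrow>
       (\<lambda>n. Dn (Suc n) x * e ^ Suc n) sums Delta x e"
    and nonindep: "\<exists>x1 x2 e. \<bar>e\<bar> < epsb \<and> Delta x1 e \<noteq> Delta x2 e"
    and r_pos: "r \<ge> 1"
    and r_nonconst: "\<exists>a b. Dn r a \<noteq> Dn r b"
    and below_r_const: "\<And>n a b. 1 \<le> n \<Longrightarrow> n < r \<Longrightarrow> Dn n a = Dn n b"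
  shows "\<forall>x. Dn r (x + mu p q) = Dn r x"
proof
  fix x
  define h where "h e = Y x e - Delta x e - e * f x" for e
  define d where "d n x' = (if n = 0 then 0 else Dn n x')" for n x'
  have Delta_sums: "(\<lambda>n. d n x' * e^n) sums Delta x' e" if "\<bar>e\<bar> < epsb" for x' e
    unfolding d_def by (rule powser_sums_from_Suc[OF Dn_series[OF that]])
  have h_tendsto: "(h \<longlongrightarrow> 0) (at 0)"
    using real_analytic2_on_strip_tendsto[OF Y_an epsb_pos, of x]
      real_analytic2_on_strip_tendsto[OF Delta_an epsb_pos, of x]
    unfolding h_def[abs_def] by (auto intro!: tendsto_eq_intros simp: Y_0 Delta_0)
  have "\<forall>\<^sub>F e in at 0. \<bar>h e\<bar> < eta"
    using tendstoD[OF h_tendsto eta_pos] by (simp add: dist_real_def)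
  moreover have "\<forall>\<^sub>F e in at (0::real). \<bar>e\<bar> < epsb"
    using epsb_pos by (auto simp: eventually_at dist_real_def intro!: exI[of _ epsb])
  ultimately have "\<forall>\<^sub>F e in at 0. Delta x e = Delta (x + mu p q + h e) e"
  proof eventually_elim
    case (elim e)
    note sol_x = sol[OF elim(2), of x]
    have "iterR p q f (nat q) (x + mu p q + h e) (h e) e (Delta x e) = 0 \<and>
        iterS p q f (nat q) (x + mu p q + h e) (h e) e (Delta x e) = 0"
      unfolding h_def using sol_x
        iter_zero_Tmap_image[where f=f and p=p and x=x and y="Y x e" and e=e and d="Delta x e",
          OF q_pos f_per]
      by simp
    then show ?case using uniq[OF elim(2) conjunct1[OF sol_x] elim(1)] by simp
  qed
  moreover have "d n y = d n y'" if "n < r" for n y y'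
    using below_r_const[of n y y'] that by (simp add: d_def)
  ultimately have "d r x = d r (x + mu p q)"
    using real_analytic2_on_strip_coeff_eq[OF Delta_an epsb_pos Delta_sums _ h_tendsto] by blast
  then show "Dn r (x + mu p q) = Dn r x" using r_pos by (simp add: d_def)
qed

end
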